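(* Consider $\dot x=f(t,x,u)$, $t\in J$. Assume there exist a $C^1$ function $V:J\times\mathbb{R}^n\to[0,\infty)$, $\alpha_1,\alpha_2\in\mathcal K_\infty$, $\rho\in\mathcal K$, and a uniformly exponentially stable function $\mu\in\mathbb{PC}(J,\mathbb{R})$ such that for all $(t,x)\in J\times\mathbb{R}^n$, $\alpha_1(|x|)\le V(t,x)\le\alpha_2(|x|)$, and for all $(t,x,u)\in J\times\mathbb{R}^n\times\mathbb{R}^m$ with $V(t,x)\ge\rho(|u|)$, $$\frac{\partial V}{\partial t}(t,x)+\frac{\partial V}{\partial x}(t,x)f(t,x,u)\le\mu(t)V(t,x).$$ Then the system is input-to-state stable: there exist $\sigma\in\mathcal{KL}$ and $\gamma_1\in\mathcal K$ such that for every locally essentially bounded input $u$ and every initial state, $|x(t)|\le\sigma(|x(t_0)|,t-t_0)+\gamma_1(\|u\|_{[t_0,t]})$ for all $t\ge t_0\in J$.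
   Context: $J=[t^{\#},\infty)$; $f:J\times\mathbb{R}^n\times\mathbb{R}^m\to\mathbb{R}^n$ continuous, locally Lipschitz in $x$ for bounded $u$, $f(t,0,0)=0$; inputs $u:J\to\mathbb{R}^m$ are locally essentially bounded, and $\|u\|_{[t_0,t]}=\sup\{|u(s)|:s\in[t_0,t]\}$. Class $\mathcal K$: $\alpha:[0,\infty)\to[0,\infty)$ continuous, nondecreasing, $\alpha(0)=0$; class $\mathcal K_\infty$: continuous, strictly increasing, $\alpha(0)=0$, unbounded; class $\mathcal{KL}$: $\sigma(\cdot,t)\in\mathcal K$ for each $t$, $\sigma(s,\cdot)$ nonincreasing and tending to $0$. $\mu\in\mathbb{PC}(J,\mathbb{R})$ (piecewise continuous) is uniformly exponentially stable if there exist $\alpha>0$, $\beta\ge0$ with $\int_{t_0}^t\mu(s)ds\le-\alpha(t-t_0)+\beta$ for all $t\ge t_0\in J$. *)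

theory Defs
  imports "HOL-Analysis.Analysis"
begin

definition classK :: "(real \<Rightarrow> real) \<Rightarrow> bool" where
  "classK a \<longleftrightarrow> continuous_on {0..} a \<and> mono_on {0..} a \<and> a 0 = 0 \<and> (\<forall>s\<ge>0. a s \<ge> 0)"

definition classKinf :: "(real \<Rightarrow> real) \<Rightarrow> bool" where
  "classKinf a \<longleftrightarrow> continuous_on {0..} a \<and> strict_mono_on {0..} a \<and> a 0 = 0
      \<and> (\<forall>B. \<exists>s\<ge>0. a s > B)"

definition classKL :: "(real \<Rightarrow> real \<Rightarrow> real) \<Rightarrow> bool" where
  "classKL \<sigma> \<longleftrightarrow> (\<forall>t\<ge>0. classK (\<lambda>s. \<sigma> s t))
      \<and> (\<forall>s\<ge>0. antimono_on {0..} (\<sigma> s) \<and> ((\<sigma> s) \<longlongrightarrow> 0) at_top)"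

definition piecewise_continuous_on_J :: "real \<Rightarrow> (real \<Rightarrow> real) \<Rightarrow> bool" where
  "piecewise_continuous_on_J ts \<mu> \<longleftrightarrow>
     (\<forall>b. \<exists>S. finite S \<and> continuous_on ({ts..b} - S) \<mu> \<and>
        (\<forall>s\<in>S. (\<exists>l. (\<mu> \<longlongrightarrow> l) (at_left s)) \<and> (\<exists>r. (\<mu> \<longlongrightarrow> r) (at_right s))))"

definition uniformly_exp_stable :: "real \<Rightarrow> (real \<Rightarrow> real) \<Rightarrow> bool" where
  "uniformly_exp_stable ts \<mu> \<longleftrightarrow>
     (\<exists>a>0. \<exists>\<beta>\<ge>0. \<forall>t0 t. ts \<le> t0 \<longrightarrow> t0 \<le> t \<longrightarrow> integral {t0..t} \<mu> \<le> - a * (t - t0) + \<beta>)"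

definition loc_lipschitz_x :: "real \<Rightarrow> (real \<Rightarrow> 'a::metric_space \<Rightarrow> 'b::real_normed_vector \<Rightarrow> 'c::metric_space) \<Rightarrow> bool" where
  "loc_lipschitz_x ts f \<longleftrightarrow>
     (\<forall>t x R. ts \<le> t \<longrightarrow> (\<exists>\<delta>>0. \<exists>L. \<forall>s y z v. ts \<le> s \<and> \<bar>s - t\<bar> < \<delta> \<and> dist y x < \<delta> \<and> dist z x < \<delta>
          \<and> norm v \<le> R \<longrightarrow> dist (f s y v) (f s z v) \<le> L * dist y z))"

definition loc_ess_bounded :: "real \<Rightarrow> (real \<Rightarrow> 'b::euclidean_space) \<Rightarrow> bool" where
  "loc_ess_bounded ts u \<longleftrightarrow> u \<in> borel_measurable (lebesgue_on {ts..}) \<and>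
     (\<forall>b. \<exists>B. AE s in lebesgue. s \<in> {ts..b} \<longrightarrow> norm (u s) \<le> B)"

end

theory Submission
  imports Defs "HOL-Real_Asymp.Real_Asymp"
begin

text \<open>Along a solution x, the function W(t) = V(t, x t) satisfies
  W(r') - W(r) \<le> W(r) * (\<integral> \<mu> over [r, r']) + o(r' - r) from the right as long as W stays above
  c = \<rho>(sup \<parallel>u\<parallel>), so W(t) * exp(- \<integral> \<mu>) is nonincreasing on such intervals. Only one-sided
  increments are used: u is merely measurable, so W need not be differentiable. Comparing from the
  last time W crosses the level c, or from t0 if it never drops below c, uniform exponential
  stability of \<mu> gives W(t) \<le> max (exp \<beta> * exp (- a (t - t0)) * \<alpha>2 \<parallel>x t0\<parallel>) (exp \<beta> * c), and
  applying the inverse of \<alpha>1 yields the KL and K bounds.\<close>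

section \<open>Comparison functions\<close>

lemma classKinf_strict_mono: "classKinf a \<Longrightarrow> 0 \<le> s \<Longrightarrow> s < s' \<Longrightarrow> a s < a s'"
  unfolding classKinf_def strict_mono_on_def by auto

lemma classKinf_mono: "classKinf a \<Longrightarrow> 0 \<le> s \<Longrightarrow> s \<le> s' \<Longrightarrow> a s \<le> a s'"
  using classKinf_strict_mono[of a s s'] by (cases "s = s'") auto

lemma classKinf_nonneg: "classKinf a \<Longrightarrow> 0 \<le> s \<Longrightarrow> 0 \<le> a s"
  using classKinf_mono[of a 0 s] unfolding classKinf_def by auto

lemma classKinf_imp_classK:
  assumes K: "classKinf a"
  shows "classK a"
proof -
  have "mono_on {0..} a" by (auto intro!: mono_onI classKinf_mono[OF K])
  with K show ?thesis by (auto simp: classK_def classKinf_def intro: classKinf_nonneg[OF K])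
qed

lemma classKinf_image:
  assumes "classKinf a"
  shows "a ` {0..} = {0..}"
proof
  show "a ` {0..} \<subseteq> {0..}" using classKinf_nonneg[OF assms] by auto
  show "{0..} \<subseteq> a ` {0..}"
  proof
    fix y :: real assume "y \<in> {0..}"
    moreover obtain s where "s \<ge> 0" "a s > y" using assms unfolding classKinf_def by blast
    moreover have "continuous_on {0..s} a"
      using assms unfolding classKinf_def by (auto intro: continuous_on_subset)
    ultimately obtain r where "0 \<le> r" "r \<le> s" "a r = y"
      using IVT'[of a 0 y s] assms unfolding classKinf_def by auto
    then show "y \<in> a ` {0..}" by auto
  qed
qed

lemma classKinf_inv_into:
  assumes "classKinf a" "0 \<le> y"
  shows "inv_into {0..} a y \<ge> 0" "a (inv_into {0..} a y) = y"
  using assms classKinf_image[OF assms(1)] inv_into_into[of y a "{0..}"]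
    f_inv_into_f[of y a "{0..}"]
  by auto

lemma classKinf_inv_into_f: "classKinf a \<Longrightarrow> 0 \<le> s \<Longrightarrow> inv_into {0..} a (a s) = s"
  unfolding classKinf_def by (auto intro: inv_into_f_f strict_mono_on_imp_inj_on)

lemma classKinf_le_inv_into_iff:
  assumes "classKinf a" "0 \<le> s" "0 \<le> y"
  shows "s \<le> inv_into {0..} a y \<longleftrightarrow> a s \<le> y"
  using classKinf_inv_into[OF assms(1,3)] classKinf_mono[OF assms(1) assms(2)]
    classKinf_strict_mono[OF assms(1), of "inv_into {0..} a y" s]
  by (metis linorder_not_le)

lemma classKinf_inv_into_less_iff:
  assumes "classKinf a" "0 \<le> s" "0 \<le> y"
  shows "inv_into {0..} a y < s \<longleftrightarrow> y < a s"
  using classKinf_le_inv_into_iff[OF assms] by linarith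

lemma classKinf_inv_into_mono:
  assumes "classKinf a" "0 \<le> y" "y \<le> y'"
  shows "inv_into {0..} a y \<le> inv_into {0..} a y'"
  using classKinf_le_inv_into_iff[OF assms(1) classKinf_inv_into(1)[OF assms(1,2)], of y']
    classKinf_inv_into[OF assms(1,2)] assms by simp

lemma classKinf_inv_into_continuous:
  assumes K: "classKinf a"
  shows "continuous_on {0..} (inv_into {0..} a)"
  unfolding continuous_on_iff
proof (intro ballI allI impI)
  fix y0 e :: real assume y0: "y0 \<in> {0..}" and e: "e > 0"
  define x0 where "x0 = inv_into {0..} a y0"
  have x0: "x0 \<ge> 0" "a x0 = y0" using classKinf_inv_into[OF K] y0 by (auto simp: x0_def)
  define du where "du = a (x0 + e) - y0"
  have du: "du > 0" using classKinf_strict_mono[OF K x0(1), of "x0 + e"] x0 e by (auto simp: du_def)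
  define dl where "dl = (if x0 - e < 0 then 1 else y0 - a (x0 - e))"
  have dl: "dl > 0"
    using classKinf_strict_mono[OF K, of "x0 - e" x0] x0 e by (auto simp: dl_def)
  show "\<exists>d>0. \<forall>y\<in>{0..}. dist y y0 < d \<longrightarrow> dist (inv_into {0..} a y) (inv_into {0..} a y0) < e"
  proof (intro exI[of _ "min du dl"] conjI ballI impI)
    show "min du dl > 0" using du dl by simp
    fix y assume y: "y \<in> {0..}" "dist y y0 < min du dl"
    have "inv_into {0..} a y < x0 + e"
      using classKinf_inv_into_less_iff[OF K, of "x0 + e" y] x0 e y
      by (auto simp: du_def dist_real_def)
    moreover have "x0 - e < inv_into {0..} a y"
    proof (cases "x0 - e < 0")
      case True then show ?thesis using classKinf_inv_into[OF K] y by force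
    next
      case False
      show ?thesis
      proof (rule ccontr)
        assume "\<not> x0 - e < inv_into {0..} a y"
        then have "y \<le> a (x0 - e)"
          using classKinf_mono[OF K, of "inv_into {0..} a y" "x0 - e"] classKinf_inv_into[OF K] y
          by auto
        then show False using y False by (auto simp: dl_def dist_real_def)
      qed
    qed
    ultimately show "dist (inv_into {0..} a y) (inv_into {0..} a y0) < e"
      by (simp add: x0_def[symmetric] dist_real_def abs_less_iff)
  qed
qed

lemma classKinf_le_max_imp_le_inv_into_add:
  assumes K: "classKinf a" and "0 \<le> s" "a s \<le> max A B" "0 \<le> A" "0 \<le> B"
  shows "s \<le> inv_into {0..} a A + inv_into {0..} a B"
proof -
  have "s \<le> inv_into {0..} a A \<or> s \<le> inv_into {0..} a B"
    using assms classKinf_le_inv_into_iff[OF K] by (auto simp: le_max_iff_disj)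
  then show ?thesis using classKinf_inv_into(1)[OF K] assms(4,5) by force
qed

lemma classK_cmult:
  assumes "classK h" "0 \<le> C"
  shows "classK (\<lambda>s. C * h s)"
proof -
  have h: "continuous_on {0..} h" "mono_on {0..} h" "h 0 = 0" "\<And>s. s \<ge> 0 \<Longrightarrow> h s \<ge> 0"
    using assms(1) unfolding classK_def by auto
  have "mono_on {0..} (\<lambda>s. C * h s)"
    by (intro mono_onI mult_left_mono mono_onD[OF h(2)]) (use assms in auto)
  with h assms(2) show ?thesis by (simp add: classK_def continuous_on_mult_left)
qed

lemma classK_comp_classKinf_inv:
  assumes K: "classKinf a" and h: "classK h"
  shows "classK (\<lambda>s. inv_into {0..} a (h s))"
proof -
  have h_props: "continuous_on {0..} h" "mono_on {0..} h" "h 0 = 0" "\<And>s. s \<ge> 0 \<Longrightarrow> h s \<ge> 0"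
    using h unfolding classK_def by auto
  have "continuous_on {0..} (\<lambda>s. inv_into {0..} a (h s))"
    by (rule continuous_on_compose2[OF classKinf_inv_into_continuous[OF K] h_props(1)])
       (use h_props(4) in auto)
  moreover have "mono_on {0..} (\<lambda>s. inv_into {0..} a (h s))"
    by (intro mono_onI classKinf_inv_into_mono[OF K] h_props(4) mono_onD[OF h_props(2)]) auto
  moreover have "inv_into {0..} a (h 0) = 0"
    using classKinf_inv_into_f[OF K, of 0] K h_props(3) by (simp add: classKinf_def)
  ultimately show ?thesis
    unfolding classK_def using classKinf_inv_into(1)[OF K] h_props(4) by auto
qed

lemma classKL_exp_decay:
  assumes K1: "classKinf \<alpha>1" and K2: "classKinf \<alpha>2" and "a > 0" "C \<ge> 0"
  shows "classKL (\<lambda>s \<tau>. inv_into {0..} \<alpha>1 (C * exp (- a * \<tau>) * \<alpha>2 s))"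
  unfolding classKL_def
proof (intro conjI allI impI ballI)
  fix \<tau> :: real
  show "classK (\<lambda>s. inv_into {0..} \<alpha>1 (C * exp (- a * \<tau>) * \<alpha>2 s))"
    using classK_comp_classKinf_inv[OF K1 classK_cmult[OF classKinf_imp_classK[OF K2]]] assms(4)
    by simp
next
  fix s :: real assume s: "s \<ge> 0"
  have a2s: "\<alpha>2 s \<ge> 0" using classKinf_nonneg[OF K2 s] .
  show "antimono_on {0..} (\<lambda>\<tau>. inv_into {0..} \<alpha>1 (C * exp (- a * \<tau>) * \<alpha>2 s))"
    by (intro monotone_onI classKinf_inv_into_mono[OF K1] mult_right_mono mult_left_mono)
       (use assms a2s in auto)
  have "((\<lambda>\<tau>. exp (- a * \<tau>)) \<longlongrightarrow> 0) at_top"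
    using \<open>a > 0\<close> by real_asymp
  then have "((\<lambda>\<tau>. C * exp (- a * \<tau>) * \<alpha>2 s) \<longlongrightarrow> C * 0 * \<alpha>2 s) at_top"
    by (intro tendsto_mult tendsto_const)
  then have "((\<lambda>\<tau>. inv_into {0..} \<alpha>1 (C * exp (- a * \<tau>) * \<alpha>2 s)) \<longlongrightarrow> inv_into {0..} \<alpha>1 0) at_top"
    by (intro continuous_on_tendsto_compose[OF classKinf_inv_into_continuous[OF K1]])
       (use assms a2s in auto)
  then show "((\<lambda>\<tau>. inv_into {0..} \<alpha>1 (C * exp (- a * \<tau>) * \<alpha>2 s)) \<longlongrightarrow> 0) at_top"
    using classKinf_inv_into_f[OF K1, of 0] K1 by (simp add: classKinf_def)
qed

section \<open>Piecewise continuous functions\<close>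

lemma one_sided_limits_imp_eventually_bounded:
  fixes \<mu> :: "real \<Rightarrow> real"
  assumes "(\<mu> \<longlongrightarrow> l) (at_left p)" "(\<mu> \<longlongrightarrow> r) (at_right p)"
  shows "\<forall>\<^sub>F q in at p. \<bar>\<mu> q\<bar> \<le> max (\<bar>l\<bar> + 1) (\<bar>r\<bar> + 1)"
proof -
  have "\<forall>\<^sub>F q in at_left p. dist (\<mu> q) l < 1" "\<forall>\<^sub>F q in at_right p. dist (\<mu> q) r < 1"
    using assms tendsto_iff zero_less_one by blast+
  then have "\<forall>\<^sub>F q in at_left p. \<bar>\<mu> q\<bar> \<le> max (\<bar>l\<bar> + 1) (\<bar>r\<bar> + 1)"
    "\<forall>\<^sub>F q in at_right p. \<bar>\<mu> q\<bar> \<le> max (\<bar>l\<bar> + 1) (\<bar>r\<bar> + 1)"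
    by (auto elim!: eventually_mono simp: dist_real_def)
  then show ?thesis by (simp add: at_eq_sup_left_right eventually_sup)
qed

lemma piecewise_continuous_locally_bounded:
  fixes \<mu> :: "real \<Rightarrow> real"
  assumes S: "finite S" "continuous_on ({ts..b} - S) \<mu>"
    "\<forall>s\<in>S. (\<exists>l. (\<mu> \<longlongrightarrow> l) (at_left s)) \<and> (\<exists>r. (\<mu> \<longlongrightarrow> r) (at_right s))"
    and p: "p \<in> {ts..b}"
  shows "\<exists>d>0. \<exists>B. \<forall>q\<in>{ts..b}. dist q p < d \<longrightarrow> \<bar>\<mu> q\<bar> \<le> B"
proof (cases "p \<in> S")
  case True
  then obtain B where "\<forall>\<^sub>F q in at p. \<bar>\<mu> q\<bar> \<le> B"
    using S(3) one_sided_limits_imp_eventually_bounded by blast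
  then obtain d where "d > 0" "\<forall>q. q \<noteq> p \<and> dist q p < d \<longrightarrow> \<bar>\<mu> q\<bar> \<le> B"
    unfolding eventually_at by auto
  then have "\<forall>q\<in>{ts..b}. dist q p < d \<longrightarrow> \<bar>\<mu> q\<bar> \<le> max B \<bar>\<mu> p\<bar>"
    by (metis max.coboundedI1 max.cobounded2)
  then show ?thesis using \<open>d > 0\<close> by blast
next
  case False
  obtain d0 where d0: "d0 > 0" "\<forall>q\<in>S. q \<noteq> p \<longrightarrow> d0 \<le> dist p q"
    using finite_set_avoid[OF S(1)] by blast
  obtain d where d: "d > 0" "\<forall>q\<in>{ts..b} - S. dist q p < d \<longrightarrow> dist (\<mu> q) (\<mu> p) < 1"
    using S(2) False p unfolding continuous_on_iff by (meson DiffI zero_less_one)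
  have "\<bar>\<mu> q\<bar> \<le> \<bar>\<mu> p\<bar> + 1" if "q \<in> {ts..b}" "dist q p < min d d0" for q
  proof -
    have "q \<notin> S" using d0 False that by (force simp: dist_commute)
    then show ?thesis using d that by (auto simp: dist_real_def)
  qed
  moreover have "min d d0 > 0" using d d0 by simp
  ultimately show ?thesis by blast
qed

lemma piecewise_continuous_on_J_bounded:
  assumes "piecewise_continuous_on_J ts \<mu>"
  obtains B where "\<And>q. q \<in> {ts..b} \<Longrightarrow> \<bar>\<mu> q\<bar> \<le> B"
proof -
  obtain S where S: "finite S" "continuous_on ({ts..b} - S) \<mu>"
    "\<forall>s\<in>S. (\<exists>l. (\<mu> \<longlongrightarrow> l) (at_left s)) \<and> (\<exists>r. (\<mu> \<longlongrightarrow> r) (at_right s))"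
    using assms unfolding piecewise_continuous_on_J_def by blast
  obtain D BB where DB: "\<And>p. p \<in> {ts..b} \<Longrightarrow>
      D p > 0 \<and> (\<forall>q\<in>{ts..b}. dist q p < D p \<longrightarrow> \<bar>\<mu> q\<bar> \<le> BB p)"
    using piecewise_continuous_locally_bounded[OF S] by metis
  have cover: "{ts..b} \<subseteq> (\<Union>p\<in>{ts..b}. ball p (D p))"
    using DB by force
  obtain C where C: "C \<subseteq> {ts..b}" "finite C" "{ts..b} \<subseteq> (\<Union>p\<in>C. ball p (D p))"
    by (rule compactE_image[OF compact_Icc _ cover]) auto
  show ?thesis
  proof
    fix q assume q: "q \<in> {ts..b}"
    then obtain p where p: "p \<in> C" "q \<in> ball p (D p)" using C by blast
    then have "\<bar>\<mu> q\<bar> \<le> BB p" using DB[of p] C q by (auto simp: dist_commute)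
    also have "\<dots> \<le> (\<Sum>p\<in>C. \<bar>BB p\<bar>)"
      using member_le_sum[of p C "\<lambda>p. \<bar>BB p\<bar>"] p C by simp
    finally show "\<bar>\<mu> q\<bar> \<le> (\<Sum>p\<in>C. \<bar>BB p\<bar>)" .
  qed
qed

lemma piecewise_continuous_on_J_integrable:
  assumes pc: "piecewise_continuous_on_J ts \<mu>" and "ts \<le> c"
  shows "\<mu> integrable_on {c..d}"
proof -
  obtain S where S: "finite S" "continuous_on ({ts..d} - S) \<mu>"
    using pc unfolding piecewise_continuous_on_J_def by blast
  obtain B where B: "\<And>q. q \<in> {ts..d} \<Longrightarrow> \<bar>\<mu> q\<bar> \<le> B"
    using piecewise_continuous_on_J_bounded[OF pc] by blast
  have S_sets: "S \<in> sets lebesgue" by (intro negligible_imp_sets negligible_finite S(1))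
  have "continuous_on ({c..d} - S) \<mu>"
    by (rule continuous_on_subset[OF S(2)]) (use assms in auto)
  then have "\<mu> \<in> borel_measurable (lebesgue_on ({c..d} - S))"
    by (rule continuous_imp_measurable_on_sets_lebesgue) (use S_sets in auto)
  then have "\<mu> integrable_on ({c..d} - S)"
    by (rule measurable_bounded_by_integrable_imp_integrable_real[of _ _ "\<lambda>_. B"])
       (use B assms S_sets in \<open>auto intro!: integrable_on_const fmeasurable_Diff\<close>)
  then show ?thesis
    by (rule integrable_spike_set) (auto intro: negligible_subset[OF negligible_finite[OF S(1)]])
qed

section \<open>Primitives and right increments\<close>

lemma has_integral_primitive_subinterval:
  fixes g x :: "real \<Rightarrow> 'a::banach"
  assumes x_int: "\<And>r. r \<in> {a..b} \<Longrightarrow> (g has_integral (x r - x a)) {a..r}"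
    and "a \<le> s" "s \<le> r" "r \<le> b"
  shows "(g has_integral (x r - x s)) {s..r}"
proof -
  have "b \<in> {a..b}" using assms by auto
  then have "g integrable_on {a..b}" using x_int by blast
  then have "g integrable_on {a..r}" "g integrable_on {s..r}"
    using integrable_subinterval_real assms by fastforce+
  then have "integral {a..s} g + integral {s..r} g = integral {a..r} g"
    using assms by (intro Henstock_Kurzweil_Integration.integral_combine) auto
  moreover have "integral {a..s} g = x s - x a" "integral {a..r} g = x r - x a"
    using x_int assms by (auto intro: integral_unique)
  ultimately have "integral {s..r} g = x r - x s" by (simp add: algebra_simps)
  with \<open>g integrable_on {s..r}\<close> show ?thesis by (metis integrable_integral)
qed

lemma primitive_continuous_on:
  fixes g x :: "real \<Rightarrow> 'a::banach"
  assumes x_int: "\<And>r. r \<in> {a..b} \<Longrightarrow> (g has_integral (x r - x a)) {a..r}"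
  shows "continuous_on {a..b} x"
proof (cases "a \<le> b")
  case True
  then have "g integrable_on {a..b}" using x_int[of b] by auto
  then have "continuous_on {a..b} (\<lambda>r. x a + integral {a..r} g)"
    by (intro continuous_intros indefinite_integral_continuous_1)
  moreover have "x a + integral {a..r} g = x r" if "r \<in> {a..b}" for r
    using integral_unique[OF x_int[OF that]] by simp
  ultimately show ?thesis by (rule continuous_on_eq)
qed simp

lemma primitive_lipschitz:
  fixes g x :: "real \<Rightarrow> 'a::banach"
  assumes x_int: "\<And>r. r \<in> {a..b} \<Longrightarrow> (g has_integral (x r - x a)) {a..r}"
    and g_bound: "\<And>q. q \<in> {a..b} \<Longrightarrow> norm (g q) \<le> G"
    and "a \<le> r" "r \<le> r'" "r' \<le> b"
  shows "norm (x r' - x r) \<le> G * (r' - r)"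
proof -
  have "a \<in> {a..b}" using assms by auto
  then have "G \<ge> 0" using g_bound norm_ge_zero order_trans by blast
  then show ?thesis
    using has_integral_bound_real[OF _ finite.emptyI
        has_integral_primitive_subinterval[where a = a and b = b and s = r and r = r', OF x_int]]
      g_bound assms
    by simp
qed

lemma le_if_right_increments_small:
  fixes Z :: "real \<Rightarrow> real"
  assumes "s \<le> t" and Z_cont: "continuous_on {s..t} Z"
    and small: "\<And>r e. r \<in> {s..<t} \<Longrightarrow> e > 0 \<Longrightarrow> \<forall>\<^sub>F r' in at_right r. Z r' - Z r \<le> e * (r' - r)"
  shows "Z t \<le> Z s"
proof -
  have main: "Z t \<le> Z s + e * (t - s)" if e: "e > 0" for e
  proof -
    define A where "A = {s..t} \<inter> (\<lambda>r. Z r - e * (r - s)) -` {..Z s}"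
    have "closed A" unfolding A_def
      by (intro continuous_closed_preimage) (auto intro!: continuous_intros Z_cont)
    moreover have "s \<in> A" "bdd_above A" using \<open>s \<le> t\<close> by (auto simp: A_def bdd_above_def)
    ultimately have cA: "Sup A \<in> A" using closed_contains_Sup by blast
    have "Sup A = t"
    proof (rule ccontr)
      assume "Sup A \<noteq> t"
      then have c: "Sup A \<in> {s..<t}" using cA by (auto simp: A_def)
      obtain b where b: "b > Sup A" "\<forall>r'>Sup A. r' < b \<longrightarrow> Z r' - Z (Sup A) \<le> e * (r' - Sup A)"
        using small[OF c e] unfolding eventually_at_right_field by blast
      define r' where "r' = min ((Sup A + b) / 2) t"
      have r': "Sup A < r'" "r' < b" "r' \<le> t" using b c by (auto simp: r'_def min_def)
      then have "r' \<in> A" using b cA by (auto simp: A_def algebra_simps)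
      then show False using cSup_upper[OF _ \<open>bdd_above A\<close>] r'(1) by force
    qed
    then show ?thesis using cA by (auto simp: A_def)
  qed
  show ?thesis
  proof (rule ccontr)
    assume H: "\<not> Z t \<le> Z s"
    then have "t > s" using \<open>s \<le> t\<close> by (cases "t = s") auto
    define e where "e = (Z t - Z s) / (2 * (t - s))"
    have "e > 0" "e * (t - s) = (Z t - Z s) / 2"
      using H \<open>t > s\<close> by (auto simp: e_def field_simps)
    then show False using main[of e] H by simp
  qed
qed

lemma last_level_crossing:
  fixes W :: "real \<Rightarrow> real"
  assumes "a \<le> b" and W_cont: "continuous_on {a..b} W" and "W b > c"
    and "q \<in> {a..b}" "W q \<le> c"
  obtains s where "s \<in> {a..<b}" "W s = c" "\<And>q. q \<in> {s..b} \<Longrightarrow> W q \<ge> c"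
proof -
  define A where "A = {a..b} \<inter> W -` {..c}"
  have "closed A" unfolding A_def by (intro continuous_closed_preimage W_cont) auto
  moreover have "A \<noteq> {}" "bdd_above A" using assms by (auto simp: A_def bdd_above_def)
  ultimately have sA: "Sup A \<in> A" by (rule closed_contains_Sup[rotated 2])
  then have "Sup A \<noteq> b" using \<open>W b > c\<close> by (auto simp: A_def)
  with sA have s: "Sup A \<in> {a..<b}" "W (Sup A) \<le> c" by (auto simp: A_def)
  have above: "W q > c" if "q \<in> {Sup A<..b}" for q
    using cSup_upper[OF _ \<open>bdd_above A\<close>, of q] that s by (force simp: A_def)
  have "continuous_on {Sup A..b} W" by (rule continuous_on_subset[OF W_cont]) (use s in auto)
  then obtain q where q: "Sup A \<le> q" "q \<le> b" "W q = c"
    using IVT'[of W "Sup A" c b] s \<open>W b > c\<close> by auto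
  then have "q = Sup A" using above by force
  then show ?thesis using that[of "Sup A"] q s above by (force simp: less_eq_real_def)
qed

lemma gronwall_right_increments:
  fixes W \<mu> :: "real \<Rightarrow> real"
  assumes "s \<le> t" and W_cont: "continuous_on {s..t} W" and W_nonneg: "\<And>q. q \<in> {s..t} \<Longrightarrow> 0 \<le> W q"
    and \<mu>_int: "\<mu> integrable_on {s..t}"
    and incr: "\<And>r \<epsilon>. r \<in> {s..<t} \<Longrightarrow> \<epsilon> > 0 \<Longrightarrow>
      \<forall>\<^sub>F r' in at_right r. W r' - W r \<le> W r * integral {r..r'} \<mu> + \<epsilon> * (r' - r)"
  shows "W t \<le> W s * exp (integral {s..t} \<mu>)"
proof -
  define M where "M r = integral {s..r} \<mu>" for r
  have M_int: "(\<mu> has_integral (M r - M s)) {s..r}" if "r \<in> {s..t}" for r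
    using integrable_integral[OF integrable_subinterval_real[OF \<mu>_int, of s r]] that
    by (simp add: M_def)
  have M_cont: "continuous_on {s..t} M"
    unfolding M_def by (rule indefinite_integral_continuous_1[OF \<mu>_int])
  obtain K where K: "\<forall>r\<in>{s..t}. \<bar>M r\<bar> \<le> K"
    using compact_imp_bounded[OF compact_continuous_image[OF M_cont compact_Icc]]
    unfolding bounded_iff by auto
  define Z where "Z r = W r * exp (- M r)" for r
  have "Z t \<le> Z s"
  proof (rule le_if_right_increments_small[OF \<open>s \<le> t\<close>])
    show "continuous_on {s..t} Z"
      unfolding Z_def by (intro continuous_intros W_cont M_cont)
    fix r e :: real assume r: "r \<in> {s..<t}" and e: "e > 0"
    have "e / exp K > 0" using e by simp
    have "\<forall>\<^sub>F r' in at_right r. r' \<le> t"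
      using r by (auto simp: eventually_at_right_field intro!: exI[of _ t])
    moreover note incr[OF r \<open>e / exp K > 0\<close>]
    moreover note eventually_at_right_less[of r]
    ultimately show "\<forall>\<^sub>F r' in at_right r. Z r' - Z r \<le> e * (r' - r)"
    proof eventually_elim
      case (elim r')
      then have r': "r \<in> {s..t}" "r' \<in> {s..t}" using r by auto
      define D where "D = M r' - M r"
      have "integral {r..r'} \<mu> = D"
        unfolding D_def
        using has_integral_primitive_subinterval[where a = s and b = t and s = r and r = r', OF M_int]
          r' elim
        by (auto intro: integral_unique)
      then have W_step: "W r' \<le> W r * (1 + D) + (e / exp K) * (r' - r)"
        using elim by (simp add: algebra_simps)
      have "(1 + D) * exp (- D) \<le> exp D * exp (- D)"
        by (rule mult_right_mono[OF exp_ge_add_one_self]) simp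
      then have decay: "(1 + D) * exp (- D) \<le> 1" by (simp add: exp_minus)
      have "\<bar>M r'\<bar> \<le> K" using K r'(2) by blast
      then have "exp (- M r') \<le> exp K" by simp
      have "Z r' \<le> exp (- M r') * (W r * (1 + D) + (e / exp K) * (r' - r))"
        unfolding Z_def using W_step by (simp add: mult.commute)
      also have "\<dots> = Z r * ((1 + D) * exp (- D)) + exp (- M r') * ((e / exp K) * (r' - r))"
        by (simp add: Z_def D_def algebra_simps flip: exp_add)
      also have "\<dots> \<le> Z r * 1 + exp K * ((e / exp K) * (r' - r))"
        using \<open>exp (- M r') \<le> exp K\<close> decay W_nonneg[OF r'(1)] e elim
        by (intro add_mono mult_left_mono mult_right_mono) (auto simp: Z_def)
      finally show ?case by simp
    qed
  qed
  then have "W t * exp (- M t) \<le> W s" by (simp add: Z_def M_def)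
  then have "W t * exp (- M t) * exp (M t) \<le> W s * exp (M t)"
    by (rule mult_right_mono) simp
  then show ?thesis by (simp add: M_def mult.assoc flip: exp_add)
qed

section \<open>Lyapunov functions along solutions\<close>

lemma blinfun_has_integral_increment:
  fixes L :: "(real \<times> 'a::banach) \<Rightarrow>\<^sub>L real"
  assumes "(g has_integral v) {r..r'}" "r \<le> r'"
  shows "((\<lambda>q. L (1, g q)) has_integral L (r' - r, v)) {r..r'}"
proof -
  have lin: "bounded_linear (\<lambda>v. L (0, v))"
    by (intro bounded_linear_compose[OF blinfun.bounded_linear_right] bounded_linear_Pair
        bounded_linear_zero bounded_linear_ident)
  have split: "L (c, w) = c * L (1, 0) + L (0, w)" for c w
  proof -
    have "(c, w) = c *\<^sub>R (1, 0) + (0, w)" by simp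
    then show ?thesis by (metis blinfun.add_right blinfun.scaleR_right real_scaleR_def)
  qed
  have "((\<lambda>q. L (1, 0) + L (0, g q)) has_integral ((r' - r) * L (1, 0) + L (0, v))) {r..r'}"
    using has_integral_const_real[of "L (1, 0)" r r'] has_integral_linear[OF assms(1) lin] assms(2)
    by (intro has_integral_add) (auto simp: o_def)
  moreover have "L (1, 0) + L (0, w) = L (1, w)" for w
    using split[of 1 w] by simp
  ultimately show ?thesis
    by (simp only: split[symmetric])
qed

lemma has_derivative_increment_along_lipschitz:
  fixes V :: "real \<times> 'a::real_normed_vector \<Rightarrow> real"
  assumes V_deriv: "(V has_derivative L) (at (r, x r) within D)" and "r < t"
    and in_D: "\<And>r'. r' \<in> {r..t} \<Longrightarrow> (r', x r') \<in> D"
    and lip: "\<And>r'. r' \<in> {r..t} \<Longrightarrow> norm (x r' - x r) \<le> G * (r' - r)"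
    and "\<epsilon> > 0"
  shows "\<forall>\<^sub>F r' in at_right r. V (r', x r') - V (r, x r) \<le> L (r' - r, x r' - x r) + \<epsilon> * (r' - r)"
proof -
  have "norm (x t - x r) \<le> G * (t - r)" using lip \<open>r < t\<close> by simp
  then have "0 \<le> G * (t - r)" using norm_ge_zero order_trans by blast
  then have "G \<ge> 0" using \<open>r < t\<close> by (simp add: zero_le_mult_iff)
  have pair_bound: "norm ((r', x r') - (r, x r)) \<le> (1 + G) * (r' - r)" if "r' \<in> {r..t}" for r'
    using norm_Pair_le[of "r' - r" "x r' - x r"] lip[OF that] that by (simp add: distrib_right)
  have "\<epsilon> / (1 + G) > 0" using \<open>\<epsilon> > 0\<close> \<open>G \<ge> 0\<close> by simp
  with V_deriv obtain d where "d > 0" and d: "\<forall>y\<in>D. norm (y - (r, x r)) < d \<longrightarrow>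
      norm (V y - V (r, x r) - L (y - (r, x r))) \<le> \<epsilon> / (1 + G) * norm (y - (r, x r))"
    unfolding has_derivative_within_alt by blast
  show ?thesis
    unfolding eventually_at_right_field
  proof (intro exI[of _ "min t (r + d / (1 + G))"] conjI allI impI)
    show "r < min t (r + d / (1 + G))" using \<open>r < t\<close> \<open>d > 0\<close> \<open>G \<ge> 0\<close> by simp
    fix r' assume "r < r'" "r' < min t (r + d / (1 + G))"
    moreover have "r' - r < d / (1 + G)" using \<open>r' < min t (r + d / (1 + G))\<close> by simp
    ultimately have r': "r' \<in> {r..t}" "(1 + G) * (r' - r) < d"
      using \<open>G \<ge> 0\<close> by (auto simp: pos_less_divide_eq mult.commute)
    have "norm ((r', x r') - (r, x r)) < d" using pair_bound[OF r'(1)] r'(2) by linarith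
    then have "norm (V (r', x r') - V (r, x r) - L ((r', x r') - (r, x r)))
        \<le> \<epsilon> / (1 + G) * norm ((r', x r') - (r, x r))"
      using d in_D[OF r'(1)] by blast
    then have "V (r', x r') - V (r, x r) - L ((r', x r') - (r, x r))
        \<le> \<epsilon> / (1 + G) * norm ((r', x r') - (r, x r))"
      unfolding real_norm_def by linarith
    also have "\<dots> \<le> \<epsilon> / (1 + G) * ((1 + G) * (r' - r))"
      using pair_bound[OF r'(1)] \<open>\<epsilon> > 0\<close> \<open>G \<ge> 0\<close> by (intro mult_left_mono) auto
    finally show "V (r', x r') - V (r, x r) \<le> L (r' - r, x r' - x r) + \<epsilon> * (r' - r)"
      using \<open>G \<ge> 0\<close> by simp
  qed
qed

lemma lyapunov_along_continuous:
  fixes V :: "real \<times> 'a::banach \<Rightarrow> real" and V' :: "real \<times> 'a \<Rightarrow> (real \<times> 'a) \<Rightarrow>\<^sub>L real"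
  assumes V_deriv: "\<And>p. p \<in> {ts..} \<times> UNIV \<Longrightarrow> (V has_derivative V' p) (at p within {ts..} \<times> UNIV)"
    and V'_cont: "continuous_on ({ts..} \<times> UNIV) V'"
    and "ts \<le> s" and x_int: "\<And>r. r \<in> {s..t} \<Longrightarrow> (g has_integral (x r - x s)) {s..r}"
  shows "continuous_on {s..t} (\<lambda>q. V (q, x q))" "continuous_on {s..t} (\<lambda>q. V' (q, x q))"
proof -
  have curve: "continuous_on {s..t} (\<lambda>q. (q, x q))"
    by (intro continuous_intros primitive_continuous_on[OF x_int])
  have "(\<lambda>q. (q, x q)) ` {s..t} \<subseteq> {ts..} \<times> UNIV" using \<open>ts \<le> s\<close> by auto
  moreover have "continuous_on ({ts..} \<times> UNIV) V"
    using V_deriv by (rule has_derivative_continuous_on)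
  ultimately show "continuous_on {s..t} (\<lambda>q. V (q, x q))" "continuous_on {s..t} (\<lambda>q. V' (q, x q))"
    using continuous_on_compose2[OF _ curve] V'_cont by blast+
qed

context
  fixes ts s t G B :: real
    and V :: "real \<times> 'a::banach \<Rightarrow> real" and V' :: "real \<times> 'a \<Rightarrow> (real \<times> 'a) \<Rightarrow>\<^sub>L real"
    and x g :: "real \<Rightarrow> 'a" and \<mu> :: "real \<Rightarrow> real"
  assumes V_deriv: "\<And>p. p \<in> {ts..} \<times> UNIV \<Longrightarrow> (V has_derivative V' p) (at p within {ts..} \<times> UNIV)"
    and V'_cont: "continuous_on ({ts..} \<times> UNIV) V'"
    and V_nonneg: "\<And>q. q \<in> {s..t} \<Longrightarrow> 0 \<le> V (q, x q)"
    and interval: "ts \<le> s" "s \<le> t"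
    and x_int: "\<And>r. r \<in> {s..t} \<Longrightarrow> (g has_integral (x r - x s)) {s..r}"
    and g_bound: "\<And>q. q \<in> {s..t} \<Longrightarrow> norm (g q) \<le> G"
    and \<mu>_int: "\<mu> integrable_on {s..t}"
    and \<mu>_bound: "\<And>q. q \<in> {s..t} \<Longrightarrow> \<bar>\<mu> q\<bar> \<le> B"
    and decrease: "\<And>q. q \<in> {s..t} \<Longrightarrow> V' (q, x q) (1, g q) \<le> \<mu> q * V (q, x q)"
begin

lemma lyapunov_derivative_near:
  assumes "r \<in> {s..t}" "\<epsilon> > 0"
  obtains d where "d > 0"
    "\<And>q. q \<in> {s..t} \<Longrightarrow> dist q r < d \<Longrightarrow> V' (r, x r) (1, g q) \<le> \<mu> q * V (r, x r) + \<epsilon>"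
proof -
  have "G \<ge> 0" "B \<ge> 0"
  proof -
    have "s \<in> {s..t}" using interval by simp
    then show "G \<ge> 0" "B \<ge> 0"
      using order_trans[OF norm_ge_zero g_bound] order_trans[OF abs_ge_zero \<mu>_bound] by blast+
  qed
  have "\<epsilon> / (2 * (1 + G)) > 0" "\<epsilon> / (2 * (1 + B)) > 0"
    using assms \<open>G \<ge> 0\<close> \<open>B \<ge> 0\<close> by simp_all
  obtain d1 where "d1 > 0"
    and d1: "\<forall>q\<in>{s..t}. dist q r < d1 \<longrightarrow> dist (V' (q, x q)) (V' (r, x r)) < \<epsilon> / (2 * (1 + G))"
    using lyapunov_along_continuous(2)[OF V_deriv V'_cont interval(1) x_int] assms(1)
      \<open>\<epsilon> / (2 * (1 + G)) > 0\<close>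
    unfolding continuous_on_iff by blast
  obtain d2 where "d2 > 0"
    and d2: "\<forall>q\<in>{s..t}. dist q r < d2 \<longrightarrow> dist (V (q, x q)) (V (r, x r)) < \<epsilon> / (2 * (1 + B))"
    using lyapunov_along_continuous(1)[OF V_deriv V'_cont interval(1) x_int] assms(1)
      \<open>\<epsilon> / (2 * (1 + B)) > 0\<close>
    unfolding continuous_on_iff by blast
  show ?thesis
  proof (rule that[of "min d1 d2"])
    show "min d1 d2 > 0" using \<open>d1 > 0\<close> \<open>d2 > 0\<close> by simp
    fix q assume q: "q \<in> {s..t}" "dist q r < min d1 d2"
    have "(V' (r, x r) - V' (q, x q)) (1, g q)
        \<le> norm (V' (r, x r) - V' (q, x q)) * norm (1::real, g q)"
      using norm_blinfun[of "V' (r, x r) - V' (q, x q)" "(1, g q)"] by simp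
    also have "\<dots> \<le> \<epsilon> / (2 * (1 + G)) * (1 + G)"
      using d1 q norm_Pair_le[of "1::real" "g q"] g_bound[OF q(1)] \<open>G \<ge> 0\<close>
        \<open>\<epsilon> / (2 * (1 + G)) > 0\<close>
      by (intro mult_mono) (auto simp: dist_norm norm_minus_commute)
    also have "\<dots> = \<epsilon> / 2" using \<open>G \<ge> 0\<close> by (simp add: field_simps)
    finally have tangent: "V' (r, x r) (1, g q) \<le> V' (q, x q) (1, g q) + \<epsilon> / 2"
      by (simp add: blinfun.diff_left)
    have "\<mu> q * (V (q, x q) - V (r, x r)) \<le> \<bar>\<mu> q\<bar> * \<bar>V (q, x q) - V (r, x r)\<bar>"
      by (simp add: abs_mult[symmetric])
    also have "\<dots> \<le> B * (\<epsilon> / (2 * (1 + B)))"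
      using d2 q \<mu>_bound[OF q(1)] by (intro mult_mono) (auto simp: dist_real_def)
    also have "\<dots> \<le> \<epsilon> / 2" using \<open>B \<ge> 0\<close> assms(2) by (simp add: field_simps)
    finally show "V' (r, x r) (1, g q) \<le> \<mu> q * V (r, x r) + \<epsilon>"
      using tangent decrease[OF q(1)] by (simp add: algebra_simps)
  qed
qed

lemma lyapunov_right_increment:
  assumes "r \<in> {s..<t}" "\<epsilon> > 0"
  shows "\<forall>\<^sub>F r' in at_right r.
    V (r', x r') - V (r, x r) \<le> V (r, x r) * integral {r..r'} \<mu> + \<epsilon> * (r' - r)"
proof -
  have r: "r \<in> {s..t}" "r < t" using assms(1) by auto
  obtain d where "d > 0"
    and d: "\<And>q. q \<in> {s..t} \<Longrightarrow> dist q r < d \<Longrightarrow> V' (r, x r) (1, g q) \<le> \<mu> q * V (r, x r) + \<epsilon> / 2"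
    using lyapunov_derivative_near[OF r(1)] assms(2) half_gt_zero by blast
  have "(V has_derivative V' (r, x r)) (at (r, x r) within {ts..} \<times> UNIV)"
    using V_deriv interval r by auto
  moreover have "norm (x r' - x r) \<le> G * (r' - r)" if "r' \<in> {r..t}" for r'
    using primitive_lipschitz[where a = s and b = t, OF x_int g_bound] r that by auto
  ultimately have "\<forall>\<^sub>F r' in at_right r.
      V (r', x r') - V (r, x r) \<le> V' (r, x r) (r' - r, x r' - x r) + \<epsilon> / 2 * (r' - r)"
    using interval r assms(2) by (intro has_derivative_increment_along_lipschitz[OF _ r(2)]) auto
  moreover have "\<forall>\<^sub>F r' in at_right r. r < r' \<and> r' < min t (r + d)"
    unfolding eventually_at_right_field using r \<open>d > 0\<close>
    by (intro exI[of _ "min t (r + d)"]) auto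
  ultimately show ?thesis
  proof eventually_elim
    case (elim r')
    then have r': "r' \<in> {s..t}" "r \<le> r'" using r by auto
    have "((\<lambda>q. V' (r, x r) (1, g q)) has_integral V' (r, x r) (r' - r, x r' - x r)) {r..r'}"
      using has_integral_primitive_subinterval[where a = s and b = t and s = r and r = r', OF x_int]
        r r'
      by (intro blinfun_has_integral_increment) auto
    moreover have "((\<lambda>q. \<mu> q * V (r, x r) + \<epsilon> / 2) has_integral
        (integral {r..r'} \<mu> * V (r, x r) + \<epsilon> / 2 * (r' - r))) {r..r'}"
      using integrable_subinterval_real[OF \<mu>_int, of r r'] has_integral_const_real[of "\<epsilon> / 2" r r']
        r r'
      by (intro has_integral_add has_integral_mult_left integrable_integral)
         (auto simp: mult.commute)
    ultimately have "V' (r, x r) (r' - r, x r' - x r)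
        \<le> integral {r..r'} \<mu> * V (r, x r) + \<epsilon> / 2 * (r' - r)"
      by (rule has_integral_le) (use d r r' elim in \<open>auto simp: dist_real_def\<close>)
    then show ?case using elim by (simp add: field_simps)
  qed
qed

lemma lyapunov_gronwall: "V (t, x t) \<le> V (s, x s) * exp (integral {s..t} \<mu>)"
  using interval(2) lyapunov_along_continuous(1)[OF V_deriv V'_cont interval(1) x_int] V_nonneg
    \<mu>_int lyapunov_right_increment
  by (rule gronwall_right_increments)

end

section \<open>Input-to-state stability\<close>

lemma exp_stable_level_estimate:
  fixes W \<mu> :: "real \<Rightarrow> real"
  assumes "t0 \<le> t" and W_cont: "continuous_on {t0..t} W" and "0 \<le> c" "0 \<le> a" "0 \<le> \<beta>"
    and comparison: "\<And>s. s \<in> {t0..t} \<Longrightarrow> (\<And>q. q \<in> {s..t} \<Longrightarrow> c \<le> W q) \<Longrightarrow>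
      W t \<le> W s * exp (integral {s..t} \<mu>)"
    and exp_stable: "\<And>s. s \<in> {t0..t} \<Longrightarrow> integral {s..t} \<mu> \<le> - a * (t - s) + \<beta>"
  shows "W t \<le> max (exp \<beta> * exp (- a * (t - t0)) * W t0) (exp \<beta> * c)"
proof -
  have "exp (integral {s..t} \<mu>) \<le> exp \<beta> * exp (- a * (t - s))" if "s \<in> {t0..t}" for s
    using exp_stable[OF that] by (simp flip: exp_add add: add.commute)
  note exp_bound = this
  have growth: "W t \<le> W s * (exp \<beta> * exp (- a * (t - s)))"
    if "s \<in> {t0..t}" "\<And>q. q \<in> {s..t} \<Longrightarrow> c \<le> W q" for s
  proof -
    have "0 \<le> W s" using that \<open>0 \<le> c\<close> by fastforce
    moreover have "W t \<le> W s * exp (integral {s..t} \<mu>)"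
      by (rule comparison) (use that in auto)
    ultimately show ?thesis using mult_left_mono[OF exp_bound[OF that(1)]] by fastforce
  qed
  consider "W t \<le> c" | "c < W t" "\<exists>q\<in>{t0..t}. W q \<le> c" | "\<forall>q\<in>{t0..t}. c < W q"
    by (meson not_le)
  then show ?thesis
  proof cases
    case 1
    moreover have "c \<le> exp \<beta> * c"
      using mult_right_mono[of 1 "exp \<beta>" c] \<open>0 \<le> c\<close> \<open>0 \<le> \<beta>\<close> by simp
    ultimately show ?thesis by linarith
  next
    case 2
    then obtain s where s: "s \<in> {t0..<t}" "W s = c" "\<And>q. q \<in> {s..t} \<Longrightarrow> c \<le> W q"
      using last_level_crossing[OF \<open>t0 \<le> t\<close> W_cont] by blast
    have "W t \<le> c * (exp \<beta> * exp (- a * (t - s)))" using growth[of s] s by auto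
    also have "\<dots> \<le> c * exp \<beta>"
      using s(1) \<open>0 \<le> c\<close> \<open>0 \<le> a\<close> by (intro mult_left_mono) (auto simp: mult_nonneg_nonneg)
    finally show ?thesis by (simp add: mult.commute)
  next
    case 3
    then have "W t \<le> W t0 * (exp \<beta> * exp (- a * (t - t0)))"
      using growth[of t0] \<open>t0 \<le> t\<close> by (simp add: less_imp_le)
    then show ?thesis by (simp add: mult_ac)
  qed
qed

lemma trajectory_integrand_bounded:
  fixes f :: "real \<Rightarrow> 'a::euclidean_space \<Rightarrow> 'b::euclidean_space \<Rightarrow> 'c::real_normed_vector"
  assumes f_cont: "continuous_on ({ts..} \<times> UNIV \<times> UNIV) (\<lambda>(t, x, u). f t x u)"
    and "ts \<le> t0" and x_cont: "continuous_on {t0..t} x"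
    and u_bound: "\<And>q. q \<in> {t0..t} \<Longrightarrow> norm (u q) \<le> \<nu>"
  obtains G where "\<And>q. q \<in> {t0..t} \<Longrightarrow> norm (f q (x q) (u q)) \<le> G"
proof -
  obtain X where X: "\<And>q. q \<in> {t0..t} \<Longrightarrow> norm (x q) \<le> X"
    using compact_imp_bounded[OF compact_continuous_image[OF x_cont compact_Icc]]
    unfolding bounded_iff by blast
  define K where "K = {t0..t} \<times> cball (0::'a) X \<times> cball (0::'b) \<nu>"
  have "compact K" unfolding K_def by (intro compact_Times compact_Icc compact_cball)
  moreover have "continuous_on K (\<lambda>(t, x, u). f t x u)"
    by (rule continuous_on_subset[OF f_cont]) (use \<open>ts \<le> t0\<close> in \<open>auto simp: K_def\<close>)
  ultimately have "bounded ((\<lambda>(t, x, u). f t x u) ` K)"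
    by (intro compact_imp_bounded compact_continuous_image)
  then obtain G where G: "\<forall>y\<in>(\<lambda>(t, x, u). f t x u) ` K. norm y \<le> G"
    unfolding bounded_iff by blast
  show ?thesis
  proof (rule that)
    fix q assume "q \<in> {t0..t}"
    then have "(q, x q, u q) \<in> K" using X u_bound by (auto simp: K_def)
    then show "norm (f q (x q) (u q)) \<le> G" using G by fastforce
  qed
qed

lemma lyapunov_solution_estimate:
  fixes f :: "real \<Rightarrow> 'a::euclidean_space \<Rightarrow> 'b::euclidean_space \<Rightarrow> 'a"
    and V :: "real \<times> 'a \<Rightarrow> real" and V' :: "real \<times> 'a \<Rightarrow> (real \<times> 'a) \<Rightarrow>\<^sub>L real"
  assumes f_cont: "continuous_on ({ts..} \<times> UNIV \<times> UNIV) (\<lambda>(t, x, u). f t x u)"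
    and V_deriv: "\<And>p. p \<in> {ts..} \<times> UNIV \<Longrightarrow> (V has_derivative V' p) (at p within {ts..} \<times> UNIV)"
    and V'_cont: "continuous_on ({ts..} \<times> UNIV) V'"
    and V_nonneg: "\<And>t x. ts \<le> t \<Longrightarrow> V (t, x) \<ge> 0"
    and Krho: "classK \<rho>"
    and mu_pc: "piecewise_continuous_on_J ts \<mu>"
    and exp_stable: "\<And>t0 t. ts \<le> t0 \<Longrightarrow> t0 \<le> t \<Longrightarrow> integral {t0..t} \<mu> \<le> - a * (t - t0) + \<beta>"
    and "0 \<le> a" "0 \<le> \<beta>"
    and decay: "\<And>t x u. ts \<le> t \<Longrightarrow> V (t, x) \<ge> \<rho> (norm u) \<Longrightarrow> V' (t, x) (1, f t x u) \<le> \<mu> t * V (t, x)"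
    and "ts \<le> t0" "t0 \<le> t"
    and x_int: "\<And>r. r \<in> {t0..t} \<Longrightarrow> ((\<lambda>s. f s (x s) (u s)) has_integral (x r - x t0)) {t0..r}"
    and u_bound: "\<And>q. q \<in> {t0..t} \<Longrightarrow> norm (u q) \<le> \<nu>"
  shows "V (t, x t) \<le> max (exp \<beta> * exp (- a * (t - t0)) * V (t0, x t0)) (exp \<beta> * \<rho> \<nu>)"
proof -
  obtain G where G: "\<And>q. q \<in> {t0..t} \<Longrightarrow> norm (f q (x q) (u q)) \<le> G"
    using trajectory_integrand_bounded[where u = u and \<nu> = \<nu>, OF f_cont \<open>ts \<le> t0\<close>
        primitive_continuous_on[where a = t0 and b = t, OF x_int]] u_bound
    by blast
  obtain B where B: "\<And>q. q \<in> {ts..t} \<Longrightarrow> \<bar>\<mu> q\<bar> \<le> B"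
    using piecewise_continuous_on_J_bounded[OF mu_pc] by blast
  have "t0 \<in> {t0..t}" using \<open>t0 \<le> t\<close> by simp
  then have "0 \<le> \<nu>" using u_bound norm_ge_zero[of "u t0"] by (meson order_trans)
  have \<rho>_le: "\<rho> (norm (u q)) \<le> \<rho> \<nu>" if "q \<in> {t0..t}" for q
  proof (rule mono_onD[where f = \<rho>])
    show "mono_on {0..} \<rho>" using Krho unfolding classK_def by blast
  qed (use u_bound[OF that] \<open>0 \<le> \<nu>\<close> in auto)
  show ?thesis
  proof (rule exp_stable_level_estimate[OF \<open>t0 \<le> t\<close>])
    show "continuous_on {t0..t} (\<lambda>q. V (q, x q))"
      by (rule lyapunov_along_continuous(1)[OF V_deriv V'_cont \<open>ts \<le> t0\<close> x_int])
    show "0 \<le> \<rho> \<nu>" using Krho \<open>0 \<le> \<nu>\<close> unfolding classK_def by auto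
    show "0 \<le> a" "0 \<le> \<beta>" by fact+
    show "integral {s..t} \<mu> \<le> - a * (t - s) + \<beta>" if "s \<in> {t0..t}" for s
      using exp_stable that \<open>ts \<le> t0\<close> by auto
    fix s assume s: "s \<in> {t0..t}" and above: "\<And>q. q \<in> {s..t} \<Longrightarrow> \<rho> \<nu> \<le> V (q, x q)"
    show "V (t, x t) \<le> V (s, x s) * exp (integral {s..t} \<mu>)"
    proof (rule lyapunov_gronwall[where g = "\<lambda>q. f q (x q) (u q)" and G = G and B = B,
          OF V_deriv V'_cont])
      show "ts \<le> s" "s \<le> t" using s \<open>ts \<le> t0\<close> by auto
      show "0 \<le> V (q, x q)" if "q \<in> {s..t}" for q
        using V_nonneg that \<open>ts \<le> s\<close> by simp
      show "((\<lambda>q. f q (x q) (u q)) has_integral (x r - x s)) {s..r}" if "r \<in> {s..t}" for r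
        using has_integral_primitive_subinterval[where a = t0 and b = t and s = s and r = r, OF x_int]
          s that
        by auto
      show "norm (f q (x q) (u q)) \<le> G" if "q \<in> {s..t}" for q using G s that by simp
      show "\<mu> integrable_on {s..t}"
        using piecewise_continuous_on_J_integrable[OF mu_pc \<open>ts \<le> s\<close>] .
      show "\<bar>\<mu> q\<bar> \<le> B" if "q \<in> {s..t}" for q using B \<open>ts \<le> s\<close> that by simp
      show "V' (q, x q) (1, f q (x q) (u q)) \<le> \<mu> q * V (q, x q)" if "q \<in> {s..t}" for q
        using decay[where t = q and x = "x q" and u = "u q"] \<rho>_le[of q] above[OF that] s that
          \<open>ts \<le> s\<close>
        by simp
    qed
  qed
qed

lemma lyapunov_ISS_estimate:
  fixes f :: "real \<Rightarrow> 'a::euclidean_space \<Rightarrow> 'b::euclidean_space \<Rightarrow> 'a"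
    and V :: "real \<times> 'a \<Rightarrow> real" and V' :: "real \<times> 'a \<Rightarrow> (real \<times> 'a) \<Rightarrow>\<^sub>L real"
  assumes f_cont: "continuous_on ({ts..} \<times> UNIV \<times> UNIV) (\<lambda>(t, x, u). f t x u)"
    and V_deriv: "\<And>p. p \<in> {ts..} \<times> UNIV \<Longrightarrow> (V has_derivative V' p) (at p within {ts..} \<times> UNIV)"
    and V'_cont: "continuous_on ({ts..} \<times> UNIV) V'"
    and V_nonneg: "\<And>t x. ts \<le> t \<Longrightarrow> V (t, x) \<ge> 0"
    and K1: "classKinf \<alpha>1" and K2: "classKinf \<alpha>2" and Krho: "classK \<rho>"
    and mu_pc: "piecewise_continuous_on_J ts \<mu>"
    and exp_stable: "\<And>t0 t. ts \<le> t0 \<Longrightarrow> t0 \<le> t \<Longrightarrow> integral {t0..t} \<mu> \<le> - a * (t - t0) + \<beta>"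
    and "0 \<le> a" "0 \<le> \<beta>"
    and sandwich: "\<And>t x. ts \<le> t \<Longrightarrow> \<alpha>1 (norm x) \<le> V (t, x) \<and> V (t, x) \<le> \<alpha>2 (norm x)"
    and decay: "\<And>t x u. ts \<le> t \<Longrightarrow> V (t, x) \<ge> \<rho> (norm u) \<Longrightarrow> V' (t, x) (1, f t x u) \<le> \<mu> t * V (t, x)"
    and "ts \<le> t0" "t0 \<le> t"
    and x_int: "\<And>r. r \<in> {t0..t} \<Longrightarrow> ((\<lambda>s. f s (x s) (u s)) has_integral (x r - x t0)) {t0..r}"
    and u_bound: "\<And>q. q \<in> {t0..t} \<Longrightarrow> norm (u q) \<le> \<nu>"
  shows "norm (x t) \<le> inv_into {0..} \<alpha>1 (exp \<beta> * exp (- a * (t - t0)) * \<alpha>2 (norm (x t0)))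
                      + inv_into {0..} \<alpha>1 (exp \<beta> * \<rho> \<nu>)"
proof (rule classKinf_le_max_imp_le_inv_into_add[OF K1 norm_ge_zero])
  have "V (t, x t) \<le> max (exp \<beta> * exp (- a * (t - t0)) * V (t0, x t0)) (exp \<beta> * \<rho> \<nu>)"
    by (rule lyapunov_solution_estimate[where u = u, OF f_cont V_deriv V'_cont V_nonneg Krho mu_pc
          exp_stable]) (use assms in auto)
  moreover have "exp \<beta> * exp (- a * (t - t0)) * V (t0, x t0)
      \<le> exp \<beta> * exp (- a * (t - t0)) * \<alpha>2 (norm (x t0))"
    using sandwich \<open>ts \<le> t0\<close> by simp
  moreover have "\<alpha>1 (norm (x t)) \<le> V (t, x t)" using sandwich assms by simp
  ultimately show "\<alpha>1 (norm (x t))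
      \<le> max (exp \<beta> * exp (- a * (t - t0)) * \<alpha>2 (norm (x t0))) (exp \<beta> * \<rho> \<nu>)"
    by linarith
  show "0 \<le> exp \<beta> * exp (- a * (t - t0)) * \<alpha>2 (norm (x t0))"
    using classKinf_nonneg[OF K2 norm_ge_zero, of "x t0"] by simp
  have "norm (u t0) \<le> \<nu>" using u_bound \<open>t0 \<le> t\<close> by simp
  then have "0 \<le> \<nu>" using norm_ge_zero[of "u t0"] by linarith
  then show "0 \<le> exp \<beta> * \<rho> \<nu>" using Krho by (simp add: classK_def)
qed

theorem theorem3:
  fixes ts :: real
    and f :: "real \<Rightarrow> real^'n \<Rightarrow> real^'m \<Rightarrow> real^'n"
    and V :: "(real \<times> (real^'n)) \<Rightarrow> real"
    and V' :: "(real \<times> (real^'n)) \<Rightarrow> (real \<times> (real^'n)) \<Rightarrow>\<^sub>L real"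
    and \<alpha>1 \<alpha>2 \<rho> \<mu> :: "real \<Rightarrow> real"
  assumes f_cont: "continuous_on ({ts..} \<times> UNIV \<times> UNIV) (\<lambda>(t, x, u). f t x u)"
    and f_lip: "loc_lipschitz_x ts f"
    and f_zero: "\<And>t. ts \<le> t \<Longrightarrow> f t 0 0 = 0"
    and V_deriv: "\<And>p. p \<in> {ts..} \<times> UNIV \<Longrightarrow>
                    (V has_derivative blinfun_apply (V' p)) (at p within {ts..} \<times> UNIV)"
    and V'_cont: "continuous_on ({ts..} \<times> UNIV) V'"
    and V_nonneg: "\<And>t x. ts \<le> t \<Longrightarrow> V (t, x) \<ge> 0"
    and K1: "classKinf \<alpha>1" and K2: "classKinf \<alpha>2" and Krho: "classK \<rho>"
    and mu_pc: "piecewise_continuous_on_J ts \<mu>"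
    and mu_ues: "uniformly_exp_stable ts \<mu>"
    and sandwich: "\<And>t x. ts \<le> t \<Longrightarrow> \<alpha>1 (norm x) \<le> V (t, x) \<and> V (t, x) \<le> \<alpha>2 (norm x)"
    and decay: "\<And>t x u. ts \<le> t \<Longrightarrow> V (t, x) \<ge> \<rho> (norm u) \<Longrightarrow>
                  blinfun_apply (V' (t, x)) (1, f t x u) \<le> \<mu> t * V (t, x)"
  shows "\<exists>\<sigma> \<gamma>1. classKL \<sigma> \<and> classK \<gamma>1 \<and>
     (\<forall>u t0 T (x :: real \<Rightarrow> real^'n).
        loc_ess_bounded ts u \<and> ts \<le> t0 \<and> t0 \<le> T \<and>
        (\<forall>t\<in>{t0..T}. ((\<lambda>s. f s (x s) (u s)) has_integral (x t - x t0)) {t0..t})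
        \<longrightarrow> (\<forall>t\<in>{t0..T}. bdd_above ((\<lambda>s. norm (u s)) ` {t0..t}) \<longrightarrow>
               norm (x t) \<le> \<sigma> (norm (x t0)) (t - t0) + \<gamma>1 (SUP s\<in>{t0..t}. norm (u s))))"
  \<comment> \<open>\<open>f_lip\<close>, \<open>f_zero\<close> and \<open>loc_ess_bounded ts u\<close> only serve the existence of solutions;
    the estimate holds for every solution along which u is bounded.\<close>
proof -
  obtain a \<beta> where "a > 0" "\<beta> \<ge> 0"
    and exp_stable: "\<And>t0 t. ts \<le> t0 \<Longrightarrow> t0 \<le> t \<Longrightarrow> integral {t0..t} \<mu> \<le> - a * (t - t0) + \<beta>"
    using mu_ues unfolding uniformly_exp_stable_def by blast
  define \<sigma> where "\<sigma> s \<tau> = inv_into {0..} \<alpha>1 (exp \<beta> * exp (- a * \<tau>) * \<alpha>2 s)" for s \<tau>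
  define \<gamma> where "\<gamma> r = inv_into {0..} \<alpha>1 (exp \<beta> * \<rho> r)" for r
  have "classKL \<sigma>"
    unfolding \<sigma>_def using classKL_exp_decay[OF K1 K2 \<open>a > 0\<close>] by simp
  moreover have "classK \<gamma>"
    unfolding \<gamma>_def by (intro classK_comp_classKinf_inv[OF K1] classK_cmult[OF Krho]) simp
  moreover have "norm (x t) \<le> \<sigma> (norm (x t0)) (t - t0) + \<gamma> (SUP s\<in>{t0..t}. norm (u s))"
    if "ts \<le> t0" "t \<in> {t0..T}"
      and "\<forall>t\<in>{t0..T}. ((\<lambda>s. f s (x s) (u s)) has_integral (x t - x t0)) {t0..t}"
      and "bdd_above ((\<lambda>s. norm (u s)) ` {t0..t})" for u t0 T t and x :: "real \<Rightarrow> real^'n"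
    unfolding \<sigma>_def \<gamma>_def using that \<open>a > 0\<close> \<open>\<beta> \<ge> 0\<close>
    by (intro lyapunov_ISS_estimate[OF f_cont V_deriv V'_cont V_nonneg K1 K2 Krho mu_pc exp_stable
          _ _ sandwich decay]) (auto intro: cSUP_upper)
  ultimately show ?thesis by blast
qed

end
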